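(* Let $b_0$ satisfy conditions (C1) and (C2), and let $b$ be the solution of problem (P) on $[0,T)$. Then $$\chi_d\Theta\, b_r(r,t)^2\le \frac23\, b(0,t)^3\quad\text{for all }(r,t)\in D_T.$$
   Context: Fix $d>2$, $\Theta>0$; $\chi_d$ is the volume of the unit ball in $\mathbb R^d$, $D=(0,1)$, $D_T=D\times(0,T)$. Problem (P): $b_t=\chi_d\Theta\big(b_{rr}+\frac{d+1}{r}b_r\big)+\frac1d r b b_r+b^2$ in $D_T$, $b_r(0,t)=0$, $b(1,t)=1$, $b(r,0)=b_0(r)$, where $b_0\in C^2([0,1])$ with $\frac rd b_0'+b_0\ge0$ on $D$; $b$ is the classical solution on its maximal existence interval $[0,T)$. Condition (C1): $b_0'(r)\le 0$ for $r\in D$. Condition (C2): $\chi_d\Theta\big(b_0''+\frac{d+1}{r}b_0'\big)+\frac1d r b_0 b_0'+b_0^2\ge 0$ for $r\in D$. *)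

theory Defs
  imports "HOL-Analysis.Analysis"
begin

definition chi :: "nat \<Rightarrow> real" where
  "chi d = unit_ball_vol (real d)"

definition C2_01 :: "(real \<Rightarrow> real) \<Rightarrow> bool" where
  "C2_01 f \<longleftrightarrow> (\<exists>f1 f2.
      (\<forall>r\<in>{0..1}. (f has_real_derivative f1 r) (at r within {0..1})) \<and>
      (\<forall>r\<in>{0..1}. (f1 has_real_derivative f2 r) (at r within {0..1})) \<and>
      continuous_on {0..1} f2)"

definition classical_solution ::
  "nat \<Rightarrow> real \<Rightarrow> (real \<Rightarrow> real) \<Rightarrow> real \<Rightarrow> (real \<Rightarrow> real \<Rightarrow> real) \<Rightarrow> bool" where
  "classical_solution d \<Theta> b0 T b \<longleftrightarrow>
     continuous_on ({0..1} \<times> {0..<T}) (\<lambda>(r,t). b r t) \<and>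
     (\<exists>br brr bt.
        (\<forall>t\<in>{0<..<T}. \<forall>r\<in>{0..<1}.
            ((\<lambda>s. b s t) has_real_derivative br r t) (at r within {0..1})) \<and>
        continuous_on ({0..<1} \<times> {0<..<T}) (\<lambda>(r,t). br r t) \<and>
        (\<forall>t\<in>{0<..<T}. \<forall>r\<in>{0<..<1}.
            ((\<lambda>s. br s t) has_real_derivative brr r t) (at r) \<and>
            ((\<lambda>\<tau>. b r \<tau>) has_real_derivative bt r t) (at t)) \<and>
        continuous_on ({0<..<1} \<times> {0<..<T}) (\<lambda>(r,t). brr r t) \<and>
        continuous_on ({0<..<1} \<times> {0<..<T}) (\<lambda>(r,t). bt r t) \<and>
        (\<forall>t\<in>{0<..<T}. \<forall>r\<in>{0<..<1}.
            bt r t = chi d * \<Theta> * (brr r t + (real d + 1) / r * br r t)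
                     + (1 / real d) * r * b r t * br r t + (b r t)\<^sup>2) \<and>
        (\<forall>t\<in>{0<..<T}. br 0 t = 0)) \<and>
     (\<forall>t\<in>{0..<T}. b 1 t = 1) \<and>
     (\<forall>r\<in>{0..1}. b r 0 = b0 r)"

end

theory Submission
  imports Defs
begin

(* Write \<kappa> = chi d * \<Theta>. Condition (C2) says that b0 is a stationary subsolution of (P); near
   r = 0 it bounds \<kappa> (d + 1) b0'(r) / r from below, which forces b0'(0) = 0, and with (C1) and
   b0(1) = 1 it gives b0 \<ge> 1. A comparison principle for (P), obtained from a maximum principle
   for the difference of a subsolution and a supersolution, yields b \<ge> b0. A two-point maximum
   principle for b(r, t) - b(s, t) on {s \<le> r} shows that b stays nonincreasing in r, so b_r \<le> 0,
   and comparing b with its time translate b(., . + h) gives b_t \<ge> 0. The equation then reads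
   \<kappa> b_rr + b^2 = b_t - (\<kappa> (d + 1) / r + r b / d) b_r \<ge> 0, so the energy
   E = \<kappa> b_r^2 / 2 + b^3 / 3 has E_r = b_r (\<kappa> b_rr + b^2) \<le> 0, whence
   E(r, t) \<le> E(0, t) = b(0, t)^3 / 3. *)

section \<open>One-variable calculus\<close>

lemma has_real_derivative_nonneg_at_left_max:
  fixes g :: "real \<Rightarrow> real"
  assumes "(g has_real_derivative l) (at t)" "0 < \<delta>"
    and "\<And>s. t - \<delta> < s \<Longrightarrow> s < t \<Longrightarrow> g s \<le> g t"
  shows "0 \<le> l"
proof (rule ccontr)
  assume "\<not> 0 \<le> l"
  then obtain e where e: "0 < e" "\<And>h. 0 < h \<Longrightarrow> h < e \<Longrightarrow> g t < g (t - h)"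
    using DERIV_neg_dec_left[OF assms(1)] by force
  define h where "h = min e \<delta> / 2"
  have "0 < h" "h < e" "h < \<delta>"
    using e(1) \<open>0 < \<delta>\<close> by (auto simp: h_def min_def field_simps)
  then show False
    using e(2) assms(3)[of "t - h"] by force
qed

lemma has_real_derivative_pos_exceeds_right:
  fixes f :: "real \<Rightarrow> real"
  assumes "(f has_real_derivative l) (at a within {a..b})" "0 < l" "a < c" "c \<le> b"
  obtains x where "a < x" "x \<le> c" "f a < f x"
proof -
  obtain e where e: "0 < e" "\<And>h. 0 < h \<Longrightarrow> a + h \<in> {a..b} \<Longrightarrow> h < e \<Longrightarrow> f a < f (a + h)"
    using has_real_derivative_pos_inc_right[OF assms(1,2)] by force
  define h where "h = min e (c - a) / 2"
  have "0 < h" "h < e" "a + h \<le> c"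
    using e(1) assms(3) by (auto simp: h_def min_def field_simps)
  then show thesis
    using that[of "a + h"] e(2)[of h] assms(4) by force
qed

lemma interior_max_first_second_deriv:
  fixes f f' :: "real \<Rightarrow> real"
  assumes "a < x" "x < b"
    and max: "\<And>y. a < y \<Longrightarrow> y < b \<Longrightarrow> f y \<le> f x"
    and f': "\<And>y. a < y \<Longrightarrow> y < b \<Longrightarrow> (f has_real_derivative f' y) (at y)"
    and f'': "(f' has_real_derivative l) (at x)"
  shows "f' x = 0" and "l \<le> 0"
proof -
  show f'x: "f' x = 0"
  proof (rule DERIV_local_max[OF f'])
    show "0 < min (x - a) (b - x)"
      using assms by auto
    show "\<forall>y. \<bar>x - y\<bar> < min (x - a) (b - x) \<longrightarrow> f y \<le> f x"
      using max by (auto simp: abs_if)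
  qed (use assms in auto)
  show "l \<le> 0"
  proof (rule ccontr)
    assume "\<not> l \<le> 0"
    then obtain e where e: "0 < e" "\<And>h. 0 < h \<Longrightarrow> h < e \<Longrightarrow> f' x < f' (x + h)"
      using DERIV_pos_inc_right[OF f''] by force
    define h where "h = min e (b - x) / 2"
    have h: "0 < h" "h < e" "x + h < b"
      using e(1) assms(2) by (auto simp: h_def min_def field_simps)
    obtain z where z: "x < z" "z < x + h" "f (x + h) - f x = h * f' z"
      using MVT2[of x "x + h" f f'] h f' assms(1) by force
    have "0 < f' z"
      using e(2)[of "z - x"] z h f'x by auto
    then have "f x < f (x + h)"
      using z h by (simp add: algebra_simps)
    then show False
      using max[of "x + h"] h assms(1) by auto
  qed
qed

lemma vanishes_at_0_if_squeezed:
  fixes f :: "real \<Rightarrow> real"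
  assumes "continuous_on {0..1} f"
    and "\<And>r. r \<in> {0<..<1} \<Longrightarrow> - M * r \<le> f r" "\<And>r. r \<in> {0<..<1} \<Longrightarrow> f r \<le> 0"
  shows "f 0 = 0"
proof -
  have f: "(f \<longlongrightarrow> f 0) (at_right 0)"
    using continuous_on_Icc_at_rightD[OF assms(1)] by simp
  have lower: "\<forall>\<^sub>F r in at_right 0. - M * r \<le> f r"
    and upper: "\<forall>\<^sub>F r in at_right 0. f r \<le> 0"
    using assms(2,3) by (auto intro!: eventually_at_rightI[of 0 1])
  have "((\<lambda>r. - M * r) \<longlongrightarrow> 0) (at_right 0)"
    by (auto intro!: tendsto_eq_intros)
  then have "0 \<le> f 0" and "f 0 \<le> 0"
    using tendsto_le[OF trivial_limit_at_right_real f _ lower]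
      tendsto_le[OF trivial_limit_at_right_real tendsto_const f upper] by auto
  then show ?thesis
    by simp
qed

lemma deriv_Icc_interior:
  fixes f f' :: "real \<Rightarrow> real"
  assumes "\<And>x. x \<in> {a..b} \<Longrightarrow> (f has_real_derivative f' x) (at x within {a..b})" "x \<in> {a<..<b}"
  shows "deriv f x = f' x"
  using assms(1)[of x] assms(2) by (intro DERIV_imp_deriv) (simp add: at_within_Icc_at)

lemma deriv2_Icc_interior:
  fixes f f' f'' :: "real \<Rightarrow> real"
  assumes "\<And>x. x \<in> {a..b} \<Longrightarrow> (f has_real_derivative f' x) (at x within {a..b})"
    and "\<And>x. x \<in> {a..b} \<Longrightarrow> (f' has_real_derivative f'' x) (at x within {a..b})"
    and "x \<in> {a<..<b}"
  shows "deriv (deriv f) x = f'' x"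
proof (rule DERIV_imp_deriv)
  have "(f' has_real_derivative f'' x) (at x)"
    using assms(2)[of x] assms(3) by (simp add: at_within_Icc_at)
  then show "(deriv f has_real_derivative f'' x) (at x)"
    by (rule has_field_derivative_transform_within_open[of _ _ _ "{a<..<b}"])
       (use assms(3) deriv_Icc_interior[OF assms(1)] in auto)
qed

section \<open>Maximum principles\<close>

definition has_radial_derivatives ::
    "real set \<Rightarrow> (real \<Rightarrow> real \<Rightarrow> real) \<Rightarrow> (real \<Rightarrow> real \<Rightarrow> real) \<Rightarrow>
     (real \<Rightarrow> real \<Rightarrow> real) \<Rightarrow> (real \<Rightarrow> real \<Rightarrow> real) \<Rightarrow> bool" where
  "has_radial_derivatives J u ur urr ut \<longleftrightarrow>
     (\<forall>t\<in>J. ((\<lambda>r. u r t) has_real_derivative ur 0 t) (at 0 within {0..1})) \<and>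
     (\<forall>t\<in>J. \<forall>r\<in>{0<..<1}.
        ((\<lambda>r. u r t) has_real_derivative ur r t) (at r) \<and>
        ((\<lambda>r. ur r t) has_real_derivative urr r t) (at r) \<and>
        ((\<lambda>t. u r t) has_real_derivative ut r t) (at t))"

lemma has_radial_derivativesD:
  assumes "has_radial_derivatives J u ur urr ut" "t \<in> J"
  shows "((\<lambda>r. u r t) has_real_derivative ur 0 t) (at 0 within {0..1})"
    and "r \<in> {0<..<1} \<Longrightarrow> ((\<lambda>r. u r t) has_real_derivative ur r t) (at r)"
    and "r \<in> {0<..<1} \<Longrightarrow> ((\<lambda>r. ur r t) has_real_derivative urr r t) (at r)"
    and "r \<in> {0<..<1} \<Longrightarrow> ((\<lambda>t. u r t) has_real_derivative ut r t) (at t)"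
  using assms by (auto simp: has_radial_derivatives_def)

lemma has_radial_derivatives_shift:
  fixes u ur urr ut :: "real \<Rightarrow> real \<Rightarrow> real"
  assumes "has_radial_derivatives J u ur urr ut" "\<And>t. t \<in> J' \<Longrightarrow> t + h \<in> J"
  shows "has_radial_derivatives J' (\<lambda>r t. u r (t + h)) (\<lambda>r t. ur r (t + h))
           (\<lambda>r t. urr r (t + h)) (\<lambda>r t. ut r (t + h))"
  unfolding has_radial_derivatives_def
proof (intro conjI ballI)
  fix t r :: real
  assume "t \<in> J'" "r \<in> {0<..<1}"
  have "((\<lambda>t. u r t) has_real_derivative ut r (t + h)) (at (t + h))"
    using has_radial_derivativesD(4)[OF assms(1)] assms(2) \<open>t \<in> J'\<close> \<open>r \<in> {0<..<1}\<close> by blast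
  then show "((\<lambda>t. u r (t + h)) has_real_derivative ut r (t + h)) (at t)"
    using DERIV_shift[of "u r" "ut r (t + h)" t h] by simp
qed (use has_radial_derivativesD[OF assms(1)] assms(2) in auto)

context
  fixes w wr wrr wt :: "real \<Rightarrow> real \<Rightarrow> real" and T C K :: real
  assumes T_nonneg: "0 \<le> T"
    and w_cont: "continuous_on ({0..1} \<times> {0..T}) (\<lambda>(r, t). w r t)"
    and w_initial: "\<And>r. r \<in> {0..1} \<Longrightarrow> w r 0 \<le> 0"
    and w_boundary: "\<And>t. t \<in> {0..T} \<Longrightarrow> w 1 t \<le> 0"
    and w_derivs: "has_radial_derivatives {0<..T} w wr wrr wt"
    and wr_at_0_nonneg: "\<And>t. t \<in> {0<..T} \<Longrightarrow> 0 \<le> wr 0 t"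
    and w_subsolution: "\<And>r t. r \<in> {0<..<1} \<Longrightarrow> t \<in> {0<..T} \<Longrightarrow>
          0 < w r t \<Longrightarrow> wr r t \<le> 0 \<Longrightarrow> wrr r t \<le> 0 \<Longrightarrow> wt r t \<le> C * w r t + K * \<bar>wr r t\<bar>"
begin

(* The weight exp (- \<mu> t) with \<mu> > |C| + |K| makes the time derivative beat the zeroth-order term
   at an interior maximum; the penalty \<epsilon> r excludes a maximum at r = 0, where only the sign of
   w_r is known. *)

lemma parabolic_max_principle_no_interior_max:
  assumes "0 < \<epsilon>" "\<bar>C\<bar> + \<bar>K\<bar> < \<mu>" and \<rho>: "\<rho> \<in> {0<..<1}" and \<tau>: "\<tau> \<in> {0<..T}"
    and max: "\<And>r t. r \<in> {0..1} \<Longrightarrow> t \<in> {0..T} \<Longrightarrow>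
      exp (- \<mu> * t) * w r t + \<epsilon> * r \<le> exp (- \<mu> * \<tau>) * w \<rho> \<tau> + \<epsilon> * \<rho>"
  shows "exp (- \<mu> * \<tau>) * w \<rho> \<tau> \<le> \<epsilon>"
proof (rule ccontr)
  define E where "E = exp (- \<mu> * \<tau>)"
  assume "\<not> exp (- \<mu> * \<tau>) * w \<rho> \<tau> \<le> \<epsilon>"
  then have w_big: "\<epsilon> < E * w \<rho> \<tau>"
    by (simp add: E_def)
  have E_pos: "0 < E"
    by (simp add: E_def)
  have dW: "((\<lambda>r. exp (- \<mu> * \<tau>) * w r \<tau> + \<epsilon> * r) has_real_derivative E * wr r \<tau> + \<epsilon>) (at r)"
    if "0 < r" "r < 1" for r
    unfolding E_def using that
    by (auto intro!: derivative_eq_intros has_radial_derivativesD(2)[OF w_derivs \<tau>])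
  have dWr: "((\<lambda>r. E * wr r \<tau> + \<epsilon>) has_real_derivative E * wrr \<rho> \<tau>) (at \<rho>)"
    using \<rho> by (auto intro!: derivative_eq_intros has_radial_derivativesD(3)[OF w_derivs \<tau>])
  have "E * wr \<rho> \<tau> + \<epsilon> = 0" and "E * wrr \<rho> \<tau> \<le> 0"
    using interior_max_first_second_deriv[OF _ _ _ dW dWr] \<rho> \<tau> max by auto
  then have wr_eq: "wr \<rho> \<tau> = - \<epsilon> / E" and wrr_nonpos: "wrr \<rho> \<tau> \<le> 0"
    using E_pos by (auto simp: field_simps mult_le_0_iff)
  have "0 \<le> E * (wt \<rho> \<tau> - \<mu> * w \<rho> \<tau>)"
  proof (rule has_real_derivative_nonneg_at_left_max[of _ _ \<tau> \<tau>])
    show "((\<lambda>t. exp (- \<mu> * t) * w \<rho> t + \<epsilon> * \<rho>) has_real_derivative E * (wt \<rho> \<tau> - \<mu> * w \<rho> \<tau>)) (at \<tau>)"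
      unfolding E_def
      by (auto intro!: derivative_eq_intros has_radial_derivativesD(4)[OF w_derivs \<tau> \<rho>]
          simp: algebra_simps)
  qed (use \<rho> \<tau> max[of \<rho>] in auto)
  then have wt_ge: "\<mu> * w \<rho> \<tau> \<le> wt \<rho> \<tau>"
    using E_pos by (simp add: zero_le_mult_iff)
  have "\<epsilon> / E < w \<rho> \<tau>"
    using w_big E_pos by (simp add: pos_divide_less_eq mult.commute)
  then have wr_abs: "\<bar>wr \<rho> \<tau>\<bar> < w \<rho> \<tau>"
    using wr_eq E_pos \<open>0 < \<epsilon>\<close> by simp
  then have w_pos: "0 < w \<rho> \<tau>"
    by linarith
  have "wt \<rho> \<tau> \<le> C * w \<rho> \<tau> + K * \<bar>wr \<rho> \<tau>\<bar>"
    using w_subsolution[OF \<rho> \<tau> w_pos] wr_eq wrr_nonpos E_pos \<open>0 < \<epsilon>\<close> by simp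
  also have "\<dots> \<le> \<bar>C\<bar> * w \<rho> \<tau> + \<bar>K\<bar> * w \<rho> \<tau>"
  proof (rule add_mono)
    show "C * w \<rho> \<tau> \<le> \<bar>C\<bar> * w \<rho> \<tau>"
      using w_pos by (simp add: mult_right_mono)
    have "K * \<bar>wr \<rho> \<tau>\<bar> \<le> \<bar>K\<bar> * \<bar>wr \<rho> \<tau>\<bar>"
      by (simp add: mult_right_mono)
    also have "\<dots> \<le> \<bar>K\<bar> * w \<rho> \<tau>"
      using wr_abs by (simp add: mult_left_mono)
    finally show "K * \<bar>wr \<rho> \<tau>\<bar> \<le> \<bar>K\<bar> * w \<rho> \<tau>" .
  qed
  also have "\<dots> < \<mu> * w \<rho> \<tau>"
    using w_pos \<open>\<bar>C\<bar> + \<bar>K\<bar> < \<mu>\<close> by (simp add: distrib_right[symmetric])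
  finally show False
    using wt_ge by simp
qed

lemma parabolic_max_principle_penalized:
  assumes "0 < \<epsilon>" "\<bar>C\<bar> + \<bar>K\<bar> < \<mu>" "r \<in> {0..1}" "t \<in> {0..T}"
  shows "exp (- \<mu> * t) * w r t + \<epsilon> * r \<le> 2 * \<epsilon>"
proof -
  define W where "W = (\<lambda>r t. exp (- \<mu> * t) * w r t + \<epsilon> * r)"
  let ?S = "{0..1::real} \<times> {0..T}"
  have "continuous_on ?S (\<lambda>(r, t). W r t)"
    using w_cont unfolding W_def case_prod_beta' by (intro continuous_intros) auto
  then obtain \<rho> \<tau> where \<rho>\<tau>: "\<rho> \<in> {0..1}" "\<tau> \<in> {0..T}"
    and max: "\<And>r t. r \<in> {0..1} \<Longrightarrow> t \<in> {0..T} \<Longrightarrow> W r t \<le> W \<rho> \<tau>"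
    using continuous_attains_sup[of ?S "\<lambda>(r, t). W r t"] T_nonneg by (force simp: compact_Times)
  have "exp (- \<mu> * \<tau>) * w \<rho> \<tau> \<le> \<epsilon>"
  proof (cases "\<tau> = 0 \<or> \<rho> = 1")
    case True
    then have "w \<rho> \<tau> \<le> 0"
      using w_initial w_boundary \<rho>\<tau> by auto
    then have "exp (- \<mu> * \<tau>) * w \<rho> \<tau> \<le> 0"
      by (simp add: mult_nonneg_nonpos)
    then show ?thesis
      using \<open>0 < \<epsilon>\<close> by linarith
  next
    case False
    then have \<tau>: "\<tau> \<in> {0<..T}" and "\<rho> < 1"
      using \<rho>\<tau> by auto
    have "\<rho> \<noteq> 0"
    proof
      assume "\<rho> = 0"
      have "((\<lambda>r. W r \<tau>) has_real_derivative exp (- \<mu> * \<tau>) * wr 0 \<tau> + \<epsilon>) (at 0 within {0..1})"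
        unfolding W_def
        by (auto intro!: derivative_eq_intros has_radial_derivativesD(1)[OF w_derivs \<tau>])
      moreover have "0 < exp (- \<mu> * \<tau>) * wr 0 \<tau> + \<epsilon>"
        using wr_at_0_nonneg[OF \<tau>] \<open>0 < \<epsilon>\<close> by (simp add: add_nonneg_pos)
      ultimately obtain r where "0 < r" "r \<le> 1" "W 0 \<tau> < W r \<tau>"
        by (rule has_real_derivative_pos_exceeds_right) auto
      then show False
        using max[of r \<tau>] \<rho>\<tau> \<open>\<rho> = 0\<close> by auto
    qed
    then show ?thesis
      using parabolic_max_principle_no_interior_max[OF assms(1,2) _ \<tau>] max \<rho>\<tau> \<open>\<rho> < 1\<close>
      by (auto simp: W_def)
  qed
  moreover have "\<epsilon> * \<rho> \<le> \<epsilon>"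
    using \<rho>\<tau> \<open>0 < \<epsilon>\<close> by (simp add: mult_left_le)
  ultimately show ?thesis
    using max[OF assms(3,4)] unfolding W_def by linarith
qed

lemma parabolic_max_principle:
  assumes "r \<in> {0..1}" "t \<in> {0..T}"
  shows "w r t \<le> 0"
proof (rule ccontr)
  define \<mu> where "\<mu> = \<bar>C\<bar> + \<bar>K\<bar> + 1"
  define \<epsilon> where "\<epsilon> = exp (- \<mu> * t) * w r t / 4"
  assume "\<not> w r t \<le> 0"
  then have "0 < \<epsilon>"
    by (simp add: \<epsilon>_def)
  then have "exp (- \<mu> * t) * w r t + \<epsilon> * r \<le> 2 * \<epsilon>" and "0 \<le> \<epsilon> * r"
    using parabolic_max_principle_penalized[of _ \<mu>] assms by (auto simp: \<mu>_def)
  then show False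
    using \<open>0 < \<epsilon>\<close> \<epsilon>_def by linarith
qed

end

lemma continuous_on_two_point_difference:
  fixes u :: "real \<Rightarrow> real \<Rightarrow> real"
  assumes "continuous_on ({0..1} \<times> {0..T}) (\<lambda>(r, t). u r t)"
  shows "continuous_on (({0..1} \<times> {0..1}) \<times> {0..T}) (\<lambda>((r, s), t). u r t - u s t)"
proof -
  let ?B = "({0..1::real} \<times> {0..1::real}) \<times> {0..T}"
  have comp: "continuous_on ?B (\<lambda>p. u (f p) (snd p))"
    if "continuous_on ?B f" "\<And>p. p \<in> ?B \<Longrightarrow> f p \<in> {0..1}" for f
  proof -
    have "continuous_on ?B ((\<lambda>(r, t). u r t) \<circ> (\<lambda>p. (f p, snd p)))"
      using that
      by (intro continuous_on_compose continuous_intros continuous_on_subset[OF assms]) auto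
    then show ?thesis
      by (simp add: o_def)
  qed
  have "continuous_on ?B (\<lambda>p. u (fst (fst p)) (snd p))"
    by (rule comp) (auto intro!: continuous_intros)
  moreover have "continuous_on ?B (\<lambda>p. u (snd (fst p)) (snd p))"
    by (rule comp) (auto intro!: continuous_intros)
  ultimately show ?thesis
    unfolding case_prod_beta' by (intro continuous_intros)
qed

definition two_point_domain :: "real \<Rightarrow> ((real \<times> real) \<times> real) set" where
  "two_point_domain T = {((r, s), t). 0 \<le> s \<and> s \<le> r \<and> r \<le> 1 \<and> t \<in> {0..T}}"

lemma two_point_domain_attains_sup:
  fixes F :: "real \<Rightarrow> real \<Rightarrow> real \<Rightarrow> real"
  assumes "0 \<le> T" "continuous_on (two_point_domain T) (\<lambda>((r, s), t). F r s t)"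
  obtains \<rho> \<sigma> \<tau> where "0 \<le> \<sigma>" "\<sigma> \<le> \<rho>" "\<rho> \<le> 1" "\<tau> \<in> {0..T}"
    and "\<And>r s t. 0 \<le> s \<Longrightarrow> s \<le> r \<Longrightarrow> r \<le> 1 \<Longrightarrow> t \<in> {0..T} \<Longrightarrow> F r s t \<le> F \<rho> \<sigma> \<tau>"
proof -
  have "two_point_domain T = ({0..1} \<times> {0..1} \<inter> {(r, s). s \<le> r}) \<times> {0..T}"
    by (auto simp: two_point_domain_def)
  moreover have "closed {(r, s :: real). s \<le> r}"
    unfolding case_prod_beta' by (intro closed_Collect_le continuous_intros)
  ultimately have "compact (two_point_domain T)"
    by (simp add: compact_Times compact_Int_closed)
  moreover have "two_point_domain T \<noteq> {}"
    using assms(1) by (auto simp: two_point_domain_def)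
  ultimately obtain p where "p \<in> two_point_domain T"
    and max: "\<forall>q\<in>two_point_domain T. (\<lambda>((r, s), t). F r s t) q \<le> (\<lambda>((r, s), t). F r s t) p"
    using continuous_attains_sup[OF _ _ assms(2)] by blast
  obtain \<rho> \<sigma> \<tau> where p: "p = ((\<rho>, \<sigma>), \<tau>)"
    by (metis prod.collapse)
  have "0 \<le> \<sigma>" "\<sigma> \<le> \<rho>" "\<rho> \<le> 1" "\<tau> \<in> {0..T}"
    using \<open>p \<in> two_point_domain T\<close> p by (simp_all add: two_point_domain_def)
  moreover have "F r s t \<le> F \<rho> \<sigma> \<tau>" if "0 \<le> s" "s \<le> r" "r \<le> 1" "t \<in> {0..T}" for r s t
    using bspec[OF max, of "((r, s), t)"] that p by (simp add: two_point_domain_def)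
  ultimately show thesis
    by (rule that)
qed

context
  fixes u ur urr ut :: "real \<Rightarrow> real \<Rightarrow> real" and T K :: real
  assumes T_nonneg: "0 \<le> T"
    and u_cont: "continuous_on ({0..1} \<times> {0..T}) (\<lambda>(r, t). u r t)"
    and u_initial: "\<And>r s. 0 \<le> s \<Longrightarrow> s \<le> r \<Longrightarrow> r \<le> 1 \<Longrightarrow> u r 0 \<le> u s 0"
    and u_boundary: "\<And>s t. s \<in> {0..1} \<Longrightarrow> t \<in> {0..T} \<Longrightarrow> u 1 t \<le> u s t"
    and u_derivs: "has_radial_derivatives {0<..T} u ur urr ut"
    and ur_at_0_nonpos: "\<And>t. t \<in> {0<..T} \<Longrightarrow> ur 0 t \<le> 0"
    and u_two_point: "\<And>r s t. 0 < s \<Longrightarrow> s < r \<Longrightarrow> r < 1 \<Longrightarrow> t \<in> {0<..T} \<Longrightarrow>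
          u s t < u r t \<Longrightarrow> ur r t = 0 \<Longrightarrow> urr r t \<le> 0 \<Longrightarrow> 0 < ur s t \<Longrightarrow> 0 \<le> urr s t \<Longrightarrow>
          ut r t - ut s t \<le> K * (u r t - u s t)"
begin

(* As above, with the penalty \<epsilon> s excluding a maximum of u r t - u s t on the edge s = 0. *)

lemma parabolic_two_point_no_interior_max:
  assumes "0 < \<epsilon>" "\<bar>K\<bar> < \<mu>" and \<sigma>\<rho>: "0 < \<sigma>" "\<sigma> < \<rho>" "\<rho> < 1" and \<tau>: "\<tau> \<in> {0<..T}"
    and max: "\<And>r s t. 0 \<le> s \<Longrightarrow> s \<le> r \<Longrightarrow> r \<le> 1 \<Longrightarrow> t \<in> {0..T} \<Longrightarrow>
      exp (- \<mu> * t) * (u r t - u s t) + \<epsilon> * s \<le> exp (- \<mu> * \<tau>) * (u \<rho> \<tau> - u \<sigma> \<tau>) + \<epsilon> * \<sigma>"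
  shows "u \<rho> \<tau> \<le> u \<sigma> \<tau>"
proof (rule ccontr)
  define E where "E = exp (- \<mu> * \<tau>)"
  define Z where "Z = u \<rho> \<tau> - u \<sigma> \<tau>"
  assume "\<not> u \<rho> \<tau> \<le> u \<sigma> \<tau>"
  then have Z_pos: "0 < Z"
    by (simp add: Z_def)
  have E_pos: "0 < E"
    by (simp add: E_def)
  note u_r = has_radial_derivativesD(2,3)[OF u_derivs \<tau>]
  have dW: "((\<lambda>r. exp (- \<mu> * \<tau>) * (u r \<tau> - u \<sigma> \<tau>) + \<epsilon> * \<sigma>) has_real_derivative E * ur r \<tau>) (at r)"
    if "\<sigma> < r" "r < 1" for r
    unfolding E_def using that \<sigma>\<rho> by (auto intro!: derivative_eq_intros u_r)
  have dWr: "((\<lambda>r. E * ur r \<tau>) has_real_derivative E * urr \<rho> \<tau>) (at \<rho>)"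
    using \<sigma>\<rho> by (auto intro!: derivative_eq_intros u_r)
  have "exp (- \<mu> * \<tau>) * (u r \<tau> - u \<sigma> \<tau>) + \<epsilon> * \<sigma> \<le> exp (- \<mu> * \<tau>) * (u \<rho> \<tau> - u \<sigma> \<tau>) + \<epsilon> * \<sigma>"
    if "\<sigma> < r" "r < 1" for r
    using max[of \<sigma> r \<tau>] that \<sigma>\<rho> \<tau> by auto
  then have "E * ur \<rho> \<tau> = 0" "E * urr \<rho> \<tau> \<le> 0"
    using interior_max_first_second_deriv[OF _ _ _ dW dWr] \<sigma>\<rho> by auto
  then have ur_\<rho>: "ur \<rho> \<tau> = 0" and urr_\<rho>: "urr \<rho> \<tau> \<le> 0"
    using E_pos by (auto simp: mult_le_0_iff)
  have dW': "((\<lambda>s. exp (- \<mu> * \<tau>) * (u \<rho> \<tau> - u s \<tau>) + \<epsilon> * s) has_real_derivative - E * ur s \<tau> + \<epsilon>)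
      (at s)" if "0 < s" "s < \<rho>" for s
    unfolding E_def using that \<sigma>\<rho> by (auto intro!: derivative_eq_intros u_r)
  have dWs: "((\<lambda>s. - E * ur s \<tau> + \<epsilon>) has_real_derivative - E * urr \<sigma> \<tau>) (at \<sigma>)"
    using \<sigma>\<rho> by (auto intro!: derivative_eq_intros u_r)
  have "exp (- \<mu> * \<tau>) * (u \<rho> \<tau> - u s \<tau>) + \<epsilon> * s \<le> exp (- \<mu> * \<tau>) * (u \<rho> \<tau> - u \<sigma> \<tau>) + \<epsilon> * \<sigma>"
    if "0 < s" "s < \<rho>" for s
    using max[of s \<rho> \<tau>] that \<sigma>\<rho> \<tau> by auto
  then have "- E * ur \<sigma> \<tau> + \<epsilon> = 0" "- E * urr \<sigma> \<tau> \<le> 0"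
    using interior_max_first_second_deriv[OF _ _ _ dW' dWs] \<sigma>\<rho> by auto
  then have ur_\<sigma>: "0 < ur \<sigma> \<tau>" and urr_\<sigma>: "0 \<le> urr \<sigma> \<tau>"
    using E_pos \<open>0 < \<epsilon>\<close> by (auto simp: zero_le_mult_iff zero_less_mult_iff)
  have "0 \<le> E * (ut \<rho> \<tau> - ut \<sigma> \<tau> - \<mu> * Z)"
  proof (rule has_real_derivative_nonneg_at_left_max[of _ _ \<tau> \<tau>])
    show "((\<lambda>t. exp (- \<mu> * t) * (u \<rho> t - u \<sigma> t) + \<epsilon> * \<sigma>) has_real_derivative
        E * (ut \<rho> \<tau> - ut \<sigma> \<tau> - \<mu> * Z)) (at \<tau>)"
      unfolding E_def Z_def using \<sigma>\<rho>
      by (auto intro!: derivative_eq_intros has_radial_derivativesD(4)[OF u_derivs \<tau>]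
          simp: algebra_simps)
  qed (use \<tau> \<sigma>\<rho> max[of \<sigma> \<rho>] in auto)
  then have "\<mu> * Z \<le> ut \<rho> \<tau> - ut \<sigma> \<tau>"
    using E_pos by (simp add: zero_le_mult_iff)
  also have "\<dots> \<le> K * Z"
    using u_two_point[OF \<sigma>\<rho> \<tau> _ ur_\<rho> urr_\<rho> ur_\<sigma> urr_\<sigma>] Z_pos by (simp add: Z_def)
  also have "\<dots> \<le> \<bar>K\<bar> * Z"
    using Z_pos by (simp add: mult_right_mono)
  finally show False
    using Z_pos \<open>\<bar>K\<bar> < \<mu>\<close> by simp
qed

lemma parabolic_two_point_penalized:
  assumes "0 < \<epsilon>" "\<bar>K\<bar> < \<mu>" "0 \<le> s" "s \<le> r" "r \<le> 1" "t \<in> {0..T}"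
  shows "exp (- \<mu> * t) * (u r t - u s t) + \<epsilon> * s \<le> \<epsilon>"
proof -
  define W where "W = (\<lambda>r s t. exp (- \<mu> * t) * (u r t - u s t) + \<epsilon> * s)"
  have diff_cont: "continuous_on (two_point_domain T) (\<lambda>((r, s), t). u r t - u s t)"
    by (rule continuous_on_subset[OF continuous_on_two_point_difference[OF u_cont]])
      (auto simp: two_point_domain_def)
  then have "continuous_on (two_point_domain T) (\<lambda>((r, s), t). W r s t)"
    unfolding W_def case_prod_beta'
    by (intro continuous_on_add continuous_on_mult[OF _ diff_cont[unfolded case_prod_beta']])
      (auto intro!: continuous_intros)
  then obtain \<rho> \<sigma> \<tau> where \<rho>\<sigma>\<tau>: "0 \<le> \<sigma>" "\<sigma> \<le> \<rho>" "\<rho> \<le> 1" "\<tau> \<in> {0..T}"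
    and max: "\<And>r s t. 0 \<le> s \<Longrightarrow> s \<le> r \<Longrightarrow> r \<le> 1 \<Longrightarrow> t \<in> {0..T} \<Longrightarrow> W r s t \<le> W \<rho> \<sigma> \<tau>"
    by (rule two_point_domain_attains_sup[OF T_nonneg]) blast
  have "u \<rho> \<tau> \<le> u \<sigma> \<tau>"
  proof (cases "\<tau> = 0 \<or> \<rho> = 1 \<or> \<sigma> = \<rho>")
    case True
    then show ?thesis
      using u_initial[of \<sigma> \<rho>] u_boundary[of \<sigma> \<tau>] \<rho>\<sigma>\<tau> by auto
  next
    case False
    then have \<tau>: "\<tau> \<in> {0<..T}" and "\<sigma> < \<rho>" "\<rho> < 1"
      using \<rho>\<sigma>\<tau> by auto
    have "\<sigma> \<noteq> 0"
    proof
      assume "\<sigma> = 0"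
      have "((\<lambda>s. W \<rho> s \<tau>) has_real_derivative - exp (- \<mu> * \<tau>) * ur 0 \<tau> + \<epsilon>) (at 0 within {0..1})"
        unfolding W_def
        by (auto intro!: derivative_eq_intros has_radial_derivativesD(1)[OF u_derivs \<tau>])
      moreover have "0 < - exp (- \<mu> * \<tau>) * ur 0 \<tau> + \<epsilon>"
        using mult_nonneg_nonpos[OF _ ur_at_0_nonpos[OF \<tau>], of "exp (- \<mu> * \<tau>)"] \<open>0 < \<epsilon>\<close>
        by simp
      ultimately obtain s where "0 < s" "s \<le> \<rho>" "W \<rho> 0 \<tau> < W \<rho> s \<tau>"
        using \<open>\<sigma> < \<rho>\<close> \<open>\<rho> < 1\<close> \<open>\<sigma> = 0\<close> by (elim has_real_derivative_pos_exceeds_right) auto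
      then show False
        using max[of s \<rho> \<tau>] \<rho>\<sigma>\<tau> \<open>\<sigma> = 0\<close> by auto
    qed
    then show ?thesis
      using parabolic_two_point_no_interior_max[OF assms(1,2) _ \<open>\<sigma> < \<rho>\<close> \<open>\<rho> < 1\<close> \<tau>] max \<rho>\<sigma>\<tau>
      by (auto simp: W_def)
  qed
  then have "W \<rho> \<sigma> \<tau> \<le> \<epsilon> * \<sigma>"
    by (simp add: W_def mult_nonneg_nonpos)
  also have "\<dots> \<le> \<epsilon>"
    using \<rho>\<sigma>\<tau> \<open>0 < \<epsilon>\<close> by (simp add: mult_left_le)
  finally have "W \<rho> \<sigma> \<tau> \<le> \<epsilon>" .
  then show ?thesis
    using max[OF assms(3-6)] unfolding W_def by linarith
qed

lemma parabolic_two_point_antimono: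
  assumes "0 \<le> s" "s \<le> r" "r \<le> 1" "t \<in> {0..T}"
  shows "u r t \<le> u s t"
proof (rule ccontr)
  define \<mu> where "\<mu> = \<bar>K\<bar> + 1"
  define \<epsilon> where "\<epsilon> = exp (- \<mu> * t) * (u r t - u s t) / 2"
  assume "\<not> u r t \<le> u s t"
  then have "0 < \<epsilon>"
    by (simp add: \<epsilon>_def)
  then have "exp (- \<mu> * t) * (u r t - u s t) + \<epsilon> * s \<le> \<epsilon>" and "0 \<le> \<epsilon> * s"
    using parabolic_two_point_penalized[of _ \<mu>] assms by (auto simp: \<mu>_def)
  then show False
    using \<open>0 < \<epsilon>\<close> \<epsilon>_def by linarith
qed

end

section \<open>The radial problem\<close>

definition radial_rhs :: "nat \<Rightarrow> real \<Rightarrow> real \<Rightarrow> real \<Rightarrow> real \<Rightarrow> real \<Rightarrow> real" where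
  "radial_rhs d \<kappa> r u ur urr =
     \<kappa> * (urr + (real d + 1) / r * ur) + (1 / real d) * r * u * ur + u\<^sup>2"

lemma radial_rhs_diff:
  "radial_rhs d \<kappa> r u ur urr - radial_rhs d \<kappa> r v vr vrr =
     \<kappa> * (urr - vrr) + \<kappa> * ((real d + 1) / r) * (ur - vr)
     + r / real d * (ur * (u - v)) + r / real d * (v * (ur - vr)) + (u + v) * (u - v)"
proof -
  define c where "c = (real d + 1) / r"
  define e where "e = r / real d"
  have "(1 / real d) * r = e"
    by (simp add: e_def)
  then show ?thesis
    unfolding radial_rhs_def c_def[symmetric] e_def[symmetric]
    by (simp add: algebra_simps power2_eq_square)
qed

(* Splitting r u u_r - r v v_r as above lets the comparison use the sign of u_r instead of a bound
   on it: b_r is not known to be bounded near r = 1 or t = 0. *)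

lemma radial_rhs_diff_le:
  assumes "0 < d" "0 < \<kappa>" "r \<in> {0<..<1}" "v < u" "ur \<le> vr" "urr \<le> vrr" "ur \<le> 0"
    and "\<bar>u\<bar> \<le> K" "\<bar>v\<bar> \<le> K"
  shows "radial_rhs d \<kappa> r u ur urr - radial_rhs d \<kappa> r v vr vrr \<le> 2 * K * (u - v) + K * \<bar>ur - vr\<bar>"
proof -
  have r_d: "0 < r / real d" "r / real d \<le> 1"
    using assms(1,3) by (auto simp: divide_le_eq_1)
  have "\<kappa> * (urr - vrr) \<le> 0"
    using assms(2,6) by (simp add: mult_nonneg_nonpos)
  moreover have "\<kappa> * ((real d + 1) / r) * (ur - vr) \<le> 0"
    using assms(2,3,5) by (intro mult_nonneg_nonpos) auto
  moreover have "r / real d * (ur * (u - v)) \<le> 0"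
    using r_d assms(4,7) by (intro mult_nonneg_nonpos mult_nonpos_nonneg) auto
  moreover have "r / real d * (v * (ur - vr)) \<le> K * \<bar>ur - vr\<bar>"
  proof -
    have "r / real d * (v * (ur - vr)) \<le> r / real d * (\<bar>v\<bar> * \<bar>ur - vr\<bar>)"
      using r_d by (intro mult_left_mono) (auto simp: abs_mult[symmetric])
    also have "\<dots> \<le> 1 * (K * \<bar>ur - vr\<bar>)"
      using r_d assms(9) by (intro mult_mono) auto
    finally show ?thesis
      by simp
  qed
  moreover have "(u + v) * (u - v) \<le> 2 * K * (u - v)"
    using assms(4,8,9) by (intro mult_right_mono) auto
  ultimately show ?thesis
    using radial_rhs_diff[of d \<kappa> r u ur urr v vr vrr] by linarith
qed

lemma radial_comparison:
  fixes u ur urr ut v vr vrr vt :: "real \<Rightarrow> real \<Rightarrow> real"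
  assumes "0 < d" "0 < \<kappa>" "0 \<le> T"
    and u_cont: "continuous_on ({0..1} \<times> {0..T}) (\<lambda>(r, t). u r t)"
    and v_cont: "continuous_on ({0..1} \<times> {0..T}) (\<lambda>(r, t). v r t)"
    and u_derivs: "has_radial_derivatives {0<..T} u ur urr ut"
    and v_derivs: "has_radial_derivatives {0<..T} v vr vrr vt"
    and initial: "\<And>r. r \<in> {0..1} \<Longrightarrow> u r 0 \<le> v r 0"
    and boundary: "\<And>t. t \<in> {0..T} \<Longrightarrow> u 1 t \<le> v 1 t"
    and at_0: "\<And>t. t \<in> {0<..T} \<Longrightarrow> vr 0 t \<le> ur 0 t"
    and ur_nonpos: "\<And>r t. r \<in> {0<..<1} \<Longrightarrow> t \<in> {0<..T} \<Longrightarrow> ur r t \<le> 0"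
    and u_sub: "\<And>r t. r \<in> {0<..<1} \<Longrightarrow> t \<in> {0<..T} \<Longrightarrow>
          ut r t \<le> radial_rhs d \<kappa> r (u r t) (ur r t) (urr r t)"
    and v_super: "\<And>r t. r \<in> {0<..<1} \<Longrightarrow> t \<in> {0<..T} \<Longrightarrow>
          radial_rhs d \<kappa> r (v r t) (vr r t) (vrr r t) \<le> vt r t"
    and "r \<in> {0..1}" "t \<in> {0..T}"
  shows "u r t \<le> v r t"
proof -
  let ?S = "{0..1::real} \<times> {0..T}"
  have "compact ?S"
    by (simp add: compact_Times)
  obtain Ku where "0 \<le> Ku" and Ku: "\<And>p. p \<in> ?S \<Longrightarrow> norm ((\<lambda>(r, t). u r t) p) \<le> Ku"
    using continuous_on_compact_bound[OF \<open>compact ?S\<close> u_cont] by blast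
  obtain Kv where "0 \<le> Kv" and Kv: "\<And>p. p \<in> ?S \<Longrightarrow> norm ((\<lambda>(r, t). v r t) p) \<le> Kv"
    using continuous_on_compact_bound[OF \<open>compact ?S\<close> v_cont] by blast
  have "u r t - v r t \<le> 0"
  proof (rule parabolic_max_principle[where w = "\<lambda>r t. u r t - v r t"
        and wr = "\<lambda>r t. ur r t - vr r t" and wrr = "\<lambda>r t. urr r t - vrr r t"
        and wt = "\<lambda>r t. ut r t - vt r t" and C = "2 * (Ku + Kv)" and K = "Ku + Kv"])
    show "continuous_on ?S (\<lambda>(r, t). u r t - v r t)"
      using continuous_on_diff[OF u_cont v_cont] by (simp add: case_prod_beta')
    show "has_radial_derivatives {0<..T} (\<lambda>r t. u r t - v r t) (\<lambda>r t. ur r t - vr r t)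
            (\<lambda>r t. urr r t - vrr r t) (\<lambda>r t. ut r t - vt r t)"
      using has_radial_derivativesD[OF u_derivs] has_radial_derivativesD[OF v_derivs]
      by (auto simp: has_radial_derivatives_def intro!: derivative_eq_intros)
  next
    fix r t
    assume r: "r \<in> {0<..<1}" and t: "t \<in> {0<..T}" and "0 < u r t - v r t"
      and "ur r t - vr r t \<le> 0" and "urr r t - vrr r t \<le> 0"
    moreover have "\<bar>u r t\<bar> \<le> Ku + Kv" "\<bar>v r t\<bar> \<le> Ku + Kv"
      using Ku[of "(r, t)"] Kv[of "(r, t)"] r t \<open>0 \<le> Ku\<close> \<open>0 \<le> Kv\<close> by auto
    ultimately show
      "ut r t - vt r t \<le> 2 * (Ku + Kv) * (u r t - v r t) + (Ku + Kv) * \<bar>ur r t - vr r t\<bar>"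
      using radial_rhs_diff_le[OF assms(1,2) r, of "v r t" "u r t"] u_sub[OF r t] v_super[OF r t]
        ur_nonpos[OF r t] by fastforce
  qed (use assms in auto)
  then show ?thesis
    by simp
qed

locale radial_problem =
  fixes d :: nat and \<kappa> T :: real
    and b0 b0' b0'' :: "real \<Rightarrow> real"
    and b br brr bt :: "real \<Rightarrow> real \<Rightarrow> real"
  assumes d_pos: "0 < d" and \<kappa>_pos: "0 < \<kappa>" and T_pos: "0 < T"
    and b0_deriv: "\<And>r. r \<in> {0..1} \<Longrightarrow> (b0 has_real_derivative b0' r) (at r within {0..1})"
    and b0'_deriv: "\<And>r. r \<in> {0..1} \<Longrightarrow> (b0' has_real_derivative b0'' r) (at r within {0..1})"
    and b0''_cont: "continuous_on {0..1} b0''"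
    and b0'_nonpos: "\<And>r. r \<in> {0<..<1} \<Longrightarrow> b0' r \<le> 0"
    and b0_subsolution: "\<And>r. r \<in> {0<..<1} \<Longrightarrow> 0 \<le> radial_rhs d \<kappa> r (b0 r) (b0' r) (b0'' r)"
    and b_cont: "continuous_on ({0..1} \<times> {0..<T}) (\<lambda>(r, t). b r t)"
    and br_cont: "continuous_on ({0..<1} \<times> {0<..<T}) (\<lambda>(r, t). br r t)"
    and b_derivs: "has_radial_derivatives {0<..<T} b br brr bt"
    and b_solves: "\<And>r t. r \<in> {0<..<1} \<Longrightarrow> t \<in> {0<..<T} \<Longrightarrow>
          bt r t = radial_rhs d \<kappa> r (b r t) (br r t) (brr r t)"
    and br_at_0: "\<And>t. t \<in> {0<..<T} \<Longrightarrow> br 0 t = 0"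
    and b_at_1: "\<And>t. t \<in> {0..<T} \<Longrightarrow> b 1 t = 1"
    and b_initial: "\<And>r. r \<in> {0..1} \<Longrightarrow> b r 0 = b0 r"
begin

lemma b0_deriv_at: "r \<in> {0<..<1} \<Longrightarrow> (b0 has_real_derivative b0' r) (at r)"
  using b0_deriv[of r] by (simp add: at_within_Icc_at)

lemma b0'_deriv_at: "r \<in> {0<..<1} \<Longrightarrow> (b0' has_real_derivative b0'' r) (at r)"
  using b0'_deriv[of r] by (simp add: at_within_Icc_at)

lemma b0_cont: "continuous_on {0..1} b0"
  using b0_deriv by (intro DERIV_continuous_on) auto

lemma b0'_cont: "continuous_on {0..1} b0'"
  using b0'_deriv by (intro DERIV_continuous_on) auto

lemma b0_at_1: "b0 1 = 1"
  using b_at_1[of 0] b_initial[of 1] T_pos by simp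

lemma b0_antimono:
  assumes "0 \<le> s" "s \<le> r" "r \<le> 1"
  shows "b0 r \<le> b0 s"
proof (rule DERIV_nonpos_imp_decreasing_open[OF \<open>s \<le> r\<close>])
  fix x assume "s < x" "x < r"
  then show "\<exists>y. (b0 has_real_derivative y) (at x) \<and> y \<le> 0"
    using b0_deriv_at[of x] b0'_nonpos[of x] assms by auto
qed (use assms in \<open>auto intro: continuous_on_subset[OF b0_cont]\<close>)

lemma b0_ge_1: "r \<in> {0..1} \<Longrightarrow> 1 \<le> b0 r"
  using b0_antimono[of r 1] b0_at_1 by auto

lemma b0'_at_0: "b0' 0 = 0"
proof -
  obtain B2 where B2: "\<And>r. r \<in> {0..1} \<Longrightarrow> \<bar>b0'' r\<bar> \<le> B2"
    using continuous_on_compact_bound[OF compact_Icc b0''_cont] by auto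
  obtain B0 where B0: "\<And>r. r \<in> {0..1} \<Longrightarrow> \<bar>b0 r\<bar> \<le> B0"
    using continuous_on_compact_bound[OF compact_Icc b0_cont] by auto
  define M where "M = (\<kappa> * B2 + B0\<^sup>2) / (\<kappa> * (real d + 1))"
  show ?thesis
  proof (rule vanishes_at_0_if_squeezed[OF b0'_cont _ b0'_nonpos])
    fix r :: real assume r: "r \<in> {0<..<1}"
    have "\<kappa> * b0'' r \<le> \<kappa> * B2"
      using B2[of r] r \<kappa>_pos by (intro mult_left_mono) auto
    moreover have "(b0 r)\<^sup>2 \<le> B0\<^sup>2"
      using B0[of r] b0_ge_1[of r] r by (intro power_mono) auto
    moreover have "1 / real d * r * b0 r * b0' r \<le> 0"
      using r b0_ge_1[of r] b0'_nonpos[OF r] by (intro mult_nonneg_nonpos) auto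
    ultimately have "- (\<kappa> * B2 + B0\<^sup>2) \<le> \<kappa> * (real d + 1) * b0' r / r"
      using b0_subsolution[OF r] unfolding radial_rhs_def by (simp add: algebra_simps)
    then have "- (\<kappa> * B2 + B0\<^sup>2) * r \<le> \<kappa> * (real d + 1) * b0' r"
      using r by (simp add: pos_le_divide_eq)
    moreover have "0 < \<kappa> * (real d + 1)"
      using \<kappa>_pos by simp
    ultimately show "- M * r \<le> b0' r"
      unfolding M_def by (simp add: field_simps)
  qed
qed

lemma b_cont_upto: "t1 < T \<Longrightarrow> continuous_on ({0..1} \<times> {0..t1}) (\<lambda>(r, t). b r t)"
  by (rule continuous_on_subset[OF b_cont]) auto

lemma b_derivs_upto: "t1 < T \<Longrightarrow> has_radial_derivatives {0<..t1} b br brr bt"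
  using has_radial_derivatives_shift[OF b_derivs, of "{0<..t1}" 0] by simp

lemma b_ge_b0:
  assumes "r \<in> {0..1}" "t \<in> {0..<T}"
  shows "b0 r \<le> b r t"
proof (rule radial_comparison[where u = "\<lambda>r t. b0 r" and ur = "\<lambda>r t. b0' r" and urr = "\<lambda>r t. b0'' r"
      and ut = "\<lambda>r t. 0" and v = b and vr = br and vrr = brr and vt = bt and T = t])
  show "continuous_on ({0..1} \<times> {0..t}) (\<lambda>(r, t). b0 r)"
    unfolding case_prod_beta' by (rule continuous_on_compose2[OF b0_cont continuous_on_fst]) auto
  show "has_radial_derivatives {0<..t} (\<lambda>r t. b0 r) (\<lambda>r t. b0' r) (\<lambda>r t. b0'' r) (\<lambda>r t. 0)"
    using b0_deriv[of 0] b0_deriv_at b0'_deriv_at by (auto simp: has_radial_derivatives_def)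
  show "continuous_on ({0..1} \<times> {0..t}) (\<lambda>(r, t). b r t)"
    using assms by (intro b_cont_upto) auto
  show "has_radial_derivatives {0<..t} b br brr bt"
    using assms by (intro b_derivs_upto) auto
  show "b0 r \<le> b r 0" if "r \<in> {0..1}" for r
    using b_initial[OF that] by simp
  show "b0 1 \<le> b 1 s" if "s \<in> {0..t}" for s
    using b0_at_1 b_at_1[of s] that assms by simp
  show "br 0 s \<le> b0' 0" if "s \<in> {0<..t}" for s
    using b0'_at_0 br_at_0[of s] that assms by simp
  show "radial_rhs d \<kappa> r (b r s) (br r s) (brr r s) \<le> bt r s"
    if "r \<in> {0<..<1}" "s \<in> {0<..t}" for r s
    using b_solves[of r s] that assms by simp
  show "b0' r \<le> 0" if "r \<in> {0<..<1}" for r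
    using b0'_nonpos[OF that] .
  show "0 \<le> radial_rhs d \<kappa> r (b0 r) (b0' r) (b0'' r)" if "r \<in> {0<..<1}" for r
    using b0_subsolution[OF that] .
qed (use assms d_pos \<kappa>_pos in auto)

lemma b_ge_1: "r \<in> {0..1} \<Longrightarrow> t \<in> {0..<T} \<Longrightarrow> 1 \<le> b r t"
  using b0_ge_1 b_ge_b0 order_trans by blast

lemma b_two_point:
  assumes "0 < s" "s < r" "r < 1" "t \<in> {0<..<T}"
    and "br r t = 0" "brr r t \<le> 0" "0 < br s t" "0 \<le> brr s t"
  shows "bt r t - bt s t \<le> (b r t)\<^sup>2 - (b s t)\<^sup>2"
proof -
  have "bt r t = \<kappa> * brr r t + (b r t)\<^sup>2"
    using b_solves[of r t] assms(1-5) by (simp add: radial_rhs_def)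
  also have "\<dots> \<le> (b r t)\<^sup>2"
    using \<kappa>_pos assms(6) by (simp add: mult_nonneg_nonpos)
  finally have "bt r t \<le> (b r t)\<^sup>2" .
  moreover have "0 \<le> \<kappa> * (brr s t + (real d + 1) / s * br s t)"
    using \<kappa>_pos assms(1,7,8) by simp
  moreover have "0 \<le> 1 / real d * s * b s t * br s t"
    using assms(1-4,7) b_ge_1[of s t] by simp
  ultimately show ?thesis
    using b_solves[of s t] assms(1-4) by (simp add: radial_rhs_def)
qed

lemma b_antimono_r:
  assumes "0 \<le> s" "s \<le> r" "r \<le> 1" "t \<in> {0..<T}"
  shows "b r t \<le> b s t"
proof -
  have "compact ({0..1::real} \<times> {0..t})"
    by (simp add: compact_Times)
  moreover have b_cont_t: "continuous_on ({0..1} \<times> {0..t}) (\<lambda>(r, t). b r t)"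
    using assms(4) by (intro b_cont_upto) simp
  ultimately obtain K where "0 \<le> K"
    and K: "\<And>p. p \<in> {0..1} \<times> {0..t} \<Longrightarrow> norm ((\<lambda>(r, t). b r t) p) \<le> K"
    by (rule continuous_on_compact_bound) blast
  show ?thesis
  proof (rule parabolic_two_point_antimono[where u = b and ur = br and urr = brr and ut = bt
        and T = t and K = "2 * K"])
    fix r s \<tau>
    assume rs: "0 < s" "s < r" "r < 1" and \<tau>: "\<tau> \<in> {0<..t}" and "b s \<tau> < b r \<tau>"
      and "br r \<tau> = 0" "brr r \<tau> \<le> 0" "0 < br s \<tau>" "0 \<le> brr s \<tau>"
    then have "bt r \<tau> - bt s \<tau> \<le> (b r \<tau> + b s \<tau>) * (b r \<tau> - b s \<tau>)"
      using b_two_point[of s r \<tau>] assms(4) by (simp add: power2_eq_square algebra_simps)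
    also have "\<dots> \<le> 2 * K * (b r \<tau> - b s \<tau>)"
      using K[of "(r, \<tau>)"] K[of "(s, \<tau>)"] rs \<tau> \<open>b s \<tau> < b r \<tau>\<close> by (intro mult_right_mono) auto
    finally show "bt r \<tau> - bt s \<tau> \<le> 2 * K * (b r \<tau> - b s \<tau>)" .
  next
    show "b 1 \<tau> \<le> b s \<tau>" if "s \<in> {0..1}" "\<tau> \<in> {0..t}" for s \<tau>
      using b_at_1[of \<tau>] b_ge_1[of s \<tau>] that assms(4) by simp
    show "b r 0 \<le> b s 0" if "0 \<le> s" "s \<le> r" "r \<le> 1" for r s
      using b0_antimono[OF that] b_initial[of r] b_initial[of s] that by simp
    show "has_radial_derivatives {0<..t} b br brr bt"
      using assms(4) by (intro b_derivs_upto) simp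
    show "br 0 \<tau> \<le> 0" if "\<tau> \<in> {0<..t}" for \<tau>
      using br_at_0[of \<tau>] that assms(4) by simp
  qed (use assms b_cont_t in auto)
qed

lemma br_nonpos:
  assumes "r \<in> {0<..<1}" "t \<in> {0<..<T}"
  shows "br r t \<le> 0"
proof -
  have "mono_on {0..1} (\<lambda>r. - b r t)"
    using b_antimono_r assms(2) by (auto intro!: mono_onI)
  moreover have "((\<lambda>r. - b r t) has_real_derivative - br r t) (at r)"
    using has_radial_derivativesD(2)[OF b_derivs assms(2,1)] by (rule DERIV_minus)
  ultimately show ?thesis
    using mono_on_imp_deriv_nonneg assms(1) by fastforce
qed

lemma b_mono_t:
  assumes "r \<in> {0..1}" "0 \<le> t" "0 \<le> h" "t + h < T"
  shows "b r t \<le> b r (t + h)"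
proof (rule radial_comparison[where u = b and ur = br and urr = brr and ut = bt
      and v = "\<lambda>r t. b r (t + h)" and vr = "\<lambda>r t. br r (t + h)" and vrr = "\<lambda>r t. brr r (t + h)"
      and vt = "\<lambda>r t. bt r (t + h)" and T = t])
  have "continuous_on ({0..1} \<times> {0..t}) ((\<lambda>(r, t). b r t) \<circ> (\<lambda>(r, t). (r, t + h)))"
    using assms
    by (intro continuous_on_compose continuous_on_subset[OF b_cont_upto[of "t + h"]])
       (auto intro!: continuous_intros simp: case_prod_beta')
  then show "continuous_on ({0..1} \<times> {0..t}) (\<lambda>(r, t). b r (t + h))"
    by (simp add: o_def case_prod_beta')
  show "continuous_on ({0..1} \<times> {0..t}) (\<lambda>(r, t). b r t)"
    using assms by (intro b_cont_upto) simp
  show "has_radial_derivatives {0<..t} b br brr bt"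
    using assms by (intro b_derivs_upto) simp
  show "has_radial_derivatives {0<..t} (\<lambda>r t. b r (t + h)) (\<lambda>r t. br r (t + h))
          (\<lambda>r t. brr r (t + h)) (\<lambda>r t. bt r (t + h))"
    using assms by (intro has_radial_derivatives_shift[OF b_derivs]) auto
  show "b r 0 \<le> b r (0 + h)" if "r \<in> {0..1}" for r
    using b_initial[OF that] b_ge_b0[OF that] assms by simp
  show "b 1 s \<le> b 1 (s + h)" if "s \<in> {0..t}" for s
    using b_at_1[of s] b_at_1[of "s + h"] that assms by simp
  show "br 0 (s + h) \<le> br 0 s" if "s \<in> {0<..t}" for s
    using br_at_0[of s] br_at_0[of "s + h"] that assms by simp
  show "br r s \<le> 0" if "r \<in> {0<..<1}" "s \<in> {0<..t}" for r s
    using br_nonpos[of r s] that assms by simp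
  show "bt r s \<le> radial_rhs d \<kappa> r (b r s) (br r s) (brr r s)"
    if "r \<in> {0<..<1}" "s \<in> {0<..t}" for r s
    using b_solves[of r s] that assms by simp
  show "radial_rhs d \<kappa> r (b r (s + h)) (br r (s + h)) (brr r (s + h)) \<le> bt r (s + h)"
    if "r \<in> {0<..<1}" "s \<in> {0<..t}" for r s
    using b_solves[of r "s + h"] that assms by simp
qed (use assms d_pos \<kappa>_pos in auto)

lemma bt_nonneg:
  assumes "r \<in> {0<..<1}" "t \<in> {0<..<T}"
  shows "0 \<le> bt r t"
proof -
  have "mono_on {0..<T} (b r)"
  proof (rule mono_onI)
    fix s s' assume "s \<in> {0..<T}" "s' \<in> {0..<T}" "s \<le> s'"
    then show "b r s \<le> b r s'"
      using b_mono_t[of r s "s' - s"] assms(1) by simp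
  qed
  moreover have "(b r has_real_derivative bt r t) (at t)"
    using has_radial_derivativesD(4)[OF b_derivs assms(2,1)] by simp
  ultimately show ?thesis
    using mono_on_imp_deriv_nonneg assms(2) by fastforce
qed

lemma diffusion_reaction_nonneg:
  assumes "r \<in> {0<..<1}" "t \<in> {0<..<T}"
  shows "0 \<le> \<kappa> * brr r t + (b r t)\<^sup>2"
proof -
  have "\<kappa> * ((real d + 1) / r * br r t) \<le> 0"
    using \<kappa>_pos assms br_nonpos[OF assms]
    by (intro mult_nonneg_nonpos) (auto intro: mult_nonneg_nonpos)
  moreover have "1 / real d * r * b r t * br r t \<le> 0"
    using assms br_nonpos[OF assms] b_ge_1[of r t] by (intro mult_nonneg_nonpos) auto
  ultimately show ?thesis
    using bt_nonneg[OF assms] b_solves[OF assms] by (simp add: radial_rhs_def algebra_simps)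
qed

lemma gradient_bound:
  assumes "r \<in> {0<..<1}" "t \<in> {0<..<T}"
  shows "\<kappa> * (br r t)\<^sup>2 \<le> 2 / 3 * (b 0 t) ^ 3"
proof -
  define E where "E = (\<lambda>r. \<kappa> / 2 * (br r t)\<^sup>2 + (b r t) ^ 3 / 3)"
  have "continuous_on {0..r} (\<lambda>r. br r t)"
    using assms
    by (intro continuous_on_compose2[OF br_cont, of _ "\<lambda>r. (r, t)", simplified])
       (auto intro!: continuous_intros)
  moreover have "continuous_on {0..r} (\<lambda>r. b r t)"
    using assms
    by (intro continuous_on_compose2[OF b_cont, of _ "\<lambda>r. (r, t)", simplified])
       (auto intro!: continuous_intros)
  ultimately have "continuous_on {0..r} E"
    unfolding E_def by (intro continuous_intros) auto
  then have "E r \<le> E 0"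
  proof (rule DERIV_nonpos_imp_decreasing_open[of 0 r, rotated 2])
    fix x assume x: "0 < x" "x < r"
    then have x01: "x \<in> {0<..<1}"
      using assms by auto
    have "(E has_real_derivative br x t * (\<kappa> * brr x t + (b x t)\<^sup>2)) (at x)"
      unfolding E_def using has_radial_derivativesD[OF b_derivs assms(2)] x01
      by (auto intro!: derivative_eq_intros simp: algebra_simps power2_eq_square)
    moreover have "br x t * (\<kappa> * brr x t + (b x t)\<^sup>2) \<le> 0"
      using br_nonpos[OF x01 assms(2)] diffusion_reaction_nonneg[OF x01 assms(2)]
      by (rule mult_nonpos_nonneg)
    ultimately show "\<exists>y. (E has_real_derivative y) (at x) \<and> y \<le> 0"
      by blast
  qed (use assms in auto)
  then have "\<kappa> / 2 * (br r t)\<^sup>2 + (b r t) ^ 3 / 3 \<le> (b 0 t) ^ 3 / 3"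
    using br_at_0[OF assms(2)] by (simp add: E_def)
  moreover have "0 \<le> (b r t) ^ 3"
    using b_ge_1[of r t] assms by simp
  ultimately show ?thesis
    by linarith
qed

lemma deriv_b:
  "r \<in> {0<..<1} \<Longrightarrow> t \<in> {0<..<T} \<Longrightarrow> deriv (\<lambda>s. b s t) r = br r t"
  using has_radial_derivativesD(2)[OF b_derivs] by (intro DERIV_imp_deriv) auto

end

lemma classical_solution_radial_problem:
  assumes "0 < d" "0 < \<Theta>" "0 < T"
    and "\<And>r. r \<in> {0..1} \<Longrightarrow> (b0 has_real_derivative b0' r) (at r within {0..1})"
    and "\<And>r. r \<in> {0..1} \<Longrightarrow> (b0' has_real_derivative b0'' r) (at r within {0..1})"
    and "continuous_on {0..1} b0''"
    and "\<And>r. r \<in> {0<..<1} \<Longrightarrow> b0' r \<le> 0"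
    and "\<And>r. r \<in> {0<..<1} \<Longrightarrow> 0 \<le> radial_rhs d (chi d * \<Theta>) r (b0 r) (b0' r) (b0'' r)"
    and "classical_solution d \<Theta> b0 T b"
  obtains br brr bt where "radial_problem d (chi d * \<Theta>) T b0 b0' b0'' b br brr bt"
proof -
  obtain br brr bt where
      br: "\<forall>t\<in>{0<..<T}. \<forall>r\<in>{0..<1}. ((\<lambda>s. b s t) has_real_derivative br r t) (at r within {0..1})"
    and "continuous_on ({0..<1} \<times> {0<..<T}) (\<lambda>(r, t). br r t)"
    and brr_bt: "\<forall>t\<in>{0<..<T}. \<forall>r\<in>{0<..<1}.
            ((\<lambda>s. br s t) has_real_derivative brr r t) (at r) \<and>
            ((\<lambda>\<tau>. b r \<tau>) has_real_derivative bt r t) (at t)"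
    and "\<forall>t\<in>{0<..<T}. \<forall>r\<in>{0<..<1}.
            bt r t = chi d * \<Theta> * (brr r t + (real d + 1) / r * br r t)
                     + (1 / real d) * r * b r t * br r t + (b r t)\<^sup>2"
    and "\<forall>t\<in>{0<..<T}. br 0 t = 0"
    using assms(9) unfolding classical_solution_def by blast
  moreover have "((\<lambda>s. b s t) has_real_derivative br r t) (at r)"
    if "t \<in> {0<..<T}" "r \<in> {0<..<1}" for r t
  proof -
    have "((\<lambda>s. b s t) has_real_derivative br r t) (at r within {0..1})"
      using br that by auto
    then show ?thesis
      using that by (simp add: at_within_Icc_at)
  qed
  then have "has_radial_derivatives {0<..<T} b br brr bt"
    using br brr_bt by (auto simp: has_radial_derivatives_def)
  moreover have "0 < chi d * \<Theta>"
    using assms(2) by (simp add: chi_def)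
  ultimately have "radial_problem d (chi d * \<Theta>) T b0 b0' b0'' b br brr bt"
    using assms unfolding classical_solution_def
    by unfold_locales (auto simp: radial_rhs_def)
  then show thesis ..
qed

theorem lemma4p5:
  fixes d :: nat and \<Theta> T :: real
    and b0 :: "real \<Rightarrow> real" and b :: "real \<Rightarrow> real \<Rightarrow> real"
  assumes d_gt: "d > 2"
    and Theta_pos: "\<Theta> > 0"
    and T_pos: "T > 0"
    and b0_C2: "C2_01 b0"
    and b0_adm: "\<forall>r\<in>{0<..<1}. r / real d * deriv b0 r + b0 r \<ge> 0"
    and C1: "\<forall>r\<in>{0<..<1}. deriv b0 r \<le> 0"
    and C2: "\<forall>r\<in>{0<..<1}.
               chi d * \<Theta> * (deriv (deriv b0) r + (real d + 1) / r * deriv b0 r)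
               + (1 / real d) * r * b0 r * deriv b0 r + (b0 r)\<^sup>2 \<ge> 0"
    and sol: "classical_solution d \<Theta> b0 T b"
  shows "\<forall>r\<in>{0<..<1}. \<forall>t\<in>{0<..<T}.
           chi d * \<Theta> * (deriv (\<lambda>s. b s t) r)\<^sup>2 \<le> 2 / 3 * (b 0 t) ^ 3"
proof -
  obtain b0' b0'' where
      b0': "\<And>r. r \<in> {0..1} \<Longrightarrow> (b0 has_real_derivative b0' r) (at r within {0..1})"
    and b0'': "\<And>r. r \<in> {0..1} \<Longrightarrow> (b0' has_real_derivative b0'' r) (at r within {0..1})"
    and b0''_cont: "continuous_on {0..1} b0''"
    using b0_C2 unfolding C2_01_def by blast
  have derivs: "deriv b0 r = b0' r" "deriv (deriv b0) r = b0'' r" if "r \<in> {0<..<1}" for r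
    using deriv_Icc_interior[OF b0' that] deriv2_Icc_interior[OF b0' b0'' that] by auto
  obtain br brr bt where "radial_problem d (chi d * \<Theta>) T b0 b0' b0'' b br brr bt"
    by (rule classical_solution_radial_problem[OF _ Theta_pos T_pos b0' b0'' b0''_cont _ _ sol])
       (use d_gt C1 C2 derivs in \<open>auto simp: radial_rhs_def\<close>)
  then interpret radial_problem d "chi d * \<Theta>" T b0 b0' b0'' b br brr bt .
  show ?thesis
    using gradient_bound deriv_b by simp
qed

end
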